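(* Let $\mathcal{G}$ be a maximal ancestral graph (MAG) with vertex set $V$, and let $c_{\mathcal{G}}:\mathcal{P}(V)\to\{0,1\}$ be its characteristic imset, i.e. $c_{\mathcal{G}}(S)=1$ if $S\in\mathcal{S}(\mathcal{G})$ and $c_{\mathcal{G}}(S)=0$ otherwise. Define the imset $$u_{\mathcal{G}}(B)=\sum_{A:\,B\subseteq A\subseteq V}(-1)^{|A\setminus B|}\bigl(1-c_{\mathcal{G}}(A)\bigr),\qquad B\subseteq V.$$ Then $$u_{\mathcal{G}}=\delta_{V}-\delta_{\emptyset}-\sum_{H\in\mathcal{H}(\mathcal{G})}\ \sum_{W\subseteq H}(-1)^{|H\setminus W|}\,\delta_{W\cup \mathrm{tail}(H)} .$$
   Context: A mixed graph on a finite vertex set $V$ has directed edges $a\to b$ and bidirected edges $a\leftrightarrow b$, with at most one edge between any pair of vertices; it is an acyclic directed mixed graph (ADMG) if it has no directed cycle. Write $\mathrm{pa}(v)=\{w:w\to v\}$, $\mathrm{sib}(v)=\{w:w\leftrightarrow v\}$, $\mathrm{an}(v)$ for the set of $w$ with a directed path $w\to\cdots\to v$ (including $v$), $\mathrm{de}(v)$ for the set of $w$ with a directed path $v\to\cdots\to w$ (including $v$); these are extended to sets by taking unions. For $W\subseteq V$, $\mathcal{G}_W$ is the induced subgraph and $\mathrm{dis}_W(v)$ is the set of vertices joined to $v$ by a path of bidirected edges in $\mathcal{G}_W$ (including $v$). A path between $a$ and $b$ is m-connecting given $C$ ($a,b\notin C$) if every non-endpoint vertex that is a collider (both adjacent path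 edges have an arrowhead at it) lies in $\mathrm{an}(C)$ and every other non-endpoint lies outside $C$; disjoint sets $A,B$ are m-separated by $C$ if there is no m-connecting path given $C$ between any $a\in A$ and $b\in B$. A MAG is an ADMG such that $\mathrm{sib}(v)\cap\mathrm{an}(v)=\emptyset$ for all $v$, and every pair of nonadjacent vertices is m-separated by some set. For $W\subseteq V$, $\mathrm{barren}(W)=\{w\in W:\mathrm{de}(w)\cap W=\{w\}\}$. A nonempty set $H$ is a head if $\mathrm{barren}(H)=H$ and $H$ is contained in a single bidirected-connected component (district) of $\mathcal{G}_{\mathrm{an}(H)}$; $\mathcal{H}(\mathcal{G})$ is the set of heads. The tail is $\mathrm{tail}(H)=(\mathrm{dis}_{\mathrm{an}(H)}(H)\setminus H)\cup\mathrm{pa}(\mathrm{dis}_{\mathrm{an}(H)}(H))$. The parametrizing sets are $\mathcal{S}(\mathcal{G})=\{H\cup A: H\in\mathcal{H}(\mathcal{G}),\ A\subseteq\mathrm{tail}(H)\}$. An imset is a function $\mathcal{P}(V)\to\mathbb{Z}$; $\delta_A$ is the imset equal to $1$ at $A$ and $0$ elsewhere. *)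

theory Defs
  imports Main
begin

text \<open>A mixed graph is given by a vertex set V, a set D of directed edges
  (a pair (a,b) means a \<rightarrow> b) and a symmetric set Bi of bidirected edges.\<close>

definition mixed_graph :: "'v set \<Rightarrow> ('v \<times> 'v) set \<Rightarrow> ('v \<times> 'v) set \<Rightarrow> bool" where
  "mixed_graph V D Bi \<longleftrightarrow> finite V \<and> D \<subseteq> V \<times> V \<and> Bi \<subseteq> V \<times> V \<and> sym Bi \<and>
     (\<forall>a. (a,a) \<notin> D \<and> (a,a) \<notin> Bi) \<and>
     (\<forall>a b. (a,b) \<in> D \<longrightarrow> (b,a) \<notin> D \<and> (a,b) \<notin> Bi)"

definition admg :: "'v set \<Rightarrow> ('v \<times> 'v) set \<Rightarrow> ('v \<times> 'v) set \<Rightarrow> bool" where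
  "admg V D Bi \<longleftrightarrow> mixed_graph V D Bi \<and> acyclic D"

definition pa :: "('v \<times> 'v) set \<Rightarrow> 'v \<Rightarrow> 'v set" where
  "pa D v = {w. (w,v) \<in> D}"

definition paS :: "('v \<times> 'v) set \<Rightarrow> 'v set \<Rightarrow> 'v set" where
  "paS D A = (\<Union>v\<in>A. pa D v)"

definition sib :: "('v \<times> 'v) set \<Rightarrow> 'v \<Rightarrow> 'v set" where
  "sib Bi v = {w. (w,v) \<in> Bi}"

definition an :: "'v set \<Rightarrow> ('v \<times> 'v) set \<Rightarrow> 'v \<Rightarrow> 'v set" where
  "an V D v = {w \<in> V. (w,v) \<in> D\<^sup>*}"

definition anS :: "'v set \<Rightarrow> ('v \<times> 'v) set \<Rightarrow> 'v set \<Rightarrow> 'v set" where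
  "anS V D A = (\<Union>v\<in>A. an V D v)"

definition de :: "'v set \<Rightarrow> ('v \<times> 'v) set \<Rightarrow> 'v \<Rightarrow> 'v set" where
  "de V D v = {w \<in> V. (v,w) \<in> D\<^sup>*}"

definition dis :: "('v \<times> 'v) set \<Rightarrow> 'v set \<Rightarrow> 'v \<Rightarrow> 'v set" where
  "dis Bi W v = {w \<in> W. (v,w) \<in> (Bi \<inter> (W \<times> W))\<^sup>*}"

definition disS :: "('v \<times> 'v) set \<Rightarrow> 'v set \<Rightarrow> 'v set \<Rightarrow> 'v set" where
  "disS Bi W A = (\<Union>v\<in>A. dis Bi W v)"

definition adjacent :: "('v \<times> 'v) set \<Rightarrow> ('v \<times> 'v) set \<Rightarrow> 'v \<Rightarrow> 'v \<Rightarrow> bool" where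
  "adjacent D Bi a b \<longleftrightarrow> (a,b) \<in> D \<or> (b,a) \<in> D \<or> (a,b) \<in> Bi"

definition arrowhead_at :: "('v \<times> 'v) set \<Rightarrow> ('v \<times> 'v) set \<Rightarrow> 'v \<Rightarrow> 'v \<Rightarrow> bool" where
  "arrowhead_at D Bi u v \<longleftrightarrow> (u,v) \<in> D \<or> (u,v) \<in> Bi"

text \<open>A path is a list of distinct vertices, consecutive ones adjacent
  (there is at most one edge between two vertices, so the edge is determined).\<close>
definition is_path :: "'v set \<Rightarrow> ('v \<times> 'v) set \<Rightarrow> ('v \<times> 'v) set \<Rightarrow> 'v list \<Rightarrow> bool" where
  "is_path V D Bi p \<longleftrightarrow> p \<noteq> [] \<and> distinct p \<and> set p \<subseteq> V \<and>
     (\<forall>i. Suc i < length p \<longrightarrow> adjacent D Bi (p ! i) (p ! Suc i))"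

definition m_connecting ::
  "'v set \<Rightarrow> ('v \<times> 'v) set \<Rightarrow> ('v \<times> 'v) set \<Rightarrow> 'v \<Rightarrow> 'v \<Rightarrow> 'v set \<Rightarrow> 'v list \<Rightarrow> bool" where
  "m_connecting V D Bi a b C p \<longleftrightarrow> is_path V D Bi p \<and> hd p = a \<and> last p = b \<and>
     a \<notin> C \<and> b \<notin> C \<and>
     (\<forall>i. 0 < i \<and> Suc i < length p \<longrightarrow>
        (if arrowhead_at D Bi (p ! (i - 1)) (p ! i) \<and> arrowhead_at D Bi (p ! Suc i) (p ! i)
         then p ! i \<in> anS V D C else p ! i \<notin> C))"

definition m_separated ::
  "'v set \<Rightarrow> ('v \<times> 'v) set \<Rightarrow> ('v \<times> 'v) set \<Rightarrow> 'v set \<Rightarrow> 'v set \<Rightarrow> 'v set \<Rightarrow> bool" where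
  "m_separated V D Bi A B C \<longleftrightarrow>
     (\<forall>a\<in>A. \<forall>b\<in>B. \<not> (\<exists>p. m_connecting V D Bi a b C p))"

definition MAG :: "'v set \<Rightarrow> ('v \<times> 'v) set \<Rightarrow> ('v \<times> 'v) set \<Rightarrow> bool" where
  "MAG V D Bi \<longleftrightarrow> admg V D Bi \<and> (\<forall>v\<in>V. sib Bi v \<inter> an V D v = {}) \<and>
     (\<forall>a\<in>V. \<forall>b\<in>V. a \<noteq> b \<and> \<not> adjacent D Bi a b \<longrightarrow>
        (\<exists>C. C \<subseteq> V - {a, b} \<and> m_separated V D Bi {a} {b} C))"

definition barren :: "'v set \<Rightarrow> ('v \<times> 'v) set \<Rightarrow> 'v set \<Rightarrow> 'v set" where
  "barren V D W = {w \<in> W. de V D w \<inter> W = {w}}"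

definition is_head :: "'v set \<Rightarrow> ('v \<times> 'v) set \<Rightarrow> ('v \<times> 'v) set \<Rightarrow> 'v set \<Rightarrow> bool" where
  "is_head V D Bi H \<longleftrightarrow> H \<noteq> {} \<and> H \<subseteq> V \<and> barren V D H = H \<and>
     (\<exists>v \<in> anS V D H. H \<subseteq> dis Bi (anS V D H) v)"

definition heads :: "'v set \<Rightarrow> ('v \<times> 'v) set \<Rightarrow> ('v \<times> 'v) set \<Rightarrow> 'v set set" where
  "heads V D Bi = {H. is_head V D Bi H}"

definition tail :: "'v set \<Rightarrow> ('v \<times> 'v) set \<Rightarrow> ('v \<times> 'v) set \<Rightarrow> 'v set \<Rightarrow> 'v set" where
  "tail V D Bi H = (disS Bi (anS V D H) H - H) \<union> paS D (disS Bi (anS V D H) H)"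

text \<open>Parametrizing sets; following the standard convention for characteristic
  imsets, the empty set is also counted as a parametrizing set.\<close>
definition param_sets :: "'v set \<Rightarrow> ('v \<times> 'v) set \<Rightarrow> ('v \<times> 'v) set \<Rightarrow> 'v set set" where
  "param_sets V D Bi = insert {} {H \<union> A | H A. H \<in> heads V D Bi \<and> A \<subseteq> tail V D Bi H}"

definition char_imset :: "'v set \<Rightarrow> ('v \<times> 'v) set \<Rightarrow> ('v \<times> 'v) set \<Rightarrow> 'v set \<Rightarrow> int" where
  "char_imset V D Bi S = (if S \<in> param_sets V D Bi then 1 else 0)"

definition delta :: "'v set \<Rightarrow> 'v set \<Rightarrow> int" where
  "delta A S = (if S = A then 1 else 0)"

definition u_imset :: "'v set \<Rightarrow> ('v \<times> 'v) set \<Rightarrow> ('v \<times> 'v) set \<Rightarrow> 'v set \<Rightarrow> int" where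
  "u_imset V D Bi B = (\<Sum>A\<in>{A. B \<subseteq> A \<and> A \<subseteq> V}. (-1) ^ card (A - B) * (1 - char_imset V D Bi A))"

end

theory Submission
  imports Defs
begin

(* With the Moebius function mu(B, A) = (-1)^|A - B| (for B \<subseteq> A) of the subset lattice,
   u_G(B) is the sum of mu(B, A) (1 - c_G(A)) over A \<subseteq> V.  Summing mu(B, -) over all of Pow V
   gives delta_V.  Every nonempty parametrizing set is H \<union> A for a unique head H and a unique
   A \<subseteq> tail(H): the tail consists of strict ancestors of H, so H = barren(H \<union> A).  Hence the sum
   over parametrizing sets splits into the empty set (giving delta_{}) and, for each head, a sum
   over the interval [H, H \<union> tail(H)].  Since H and tail(H) are disjoint, mu factorizes over them,
   which turns the interval sum into the alternating sum of delta_{W \<union> tail(H)} over W \<subseteq> H. *)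

definition subset_mobius :: "'a set \<Rightarrow> 'a set \<Rightarrow> int" where
  "subset_mobius B A = (if B \<subseteq> A then (-1) ^ card (A - B) else 0)"

lemma sum_Pow_alternating:
  assumes "finite S" "S \<noteq> {}"
  shows "(\<Sum>W\<in>Pow S. (-1::int) ^ card W) = 0"
proof (rule sum_alternating_cancels)
  show "finite (Pow S)" using assms(1) by simp
  show "card {W \<in> Pow S. even (card W)} = card {W \<in> Pow S. odd (card W)}"
  proof -
    have "{} \<subset> S" using assms(2) by blast
    then show ?thesis using card_subsupersets_even_odd[OF assms(1), of "{}"] by (simp add: Pow_def)
  qed
qed

lemma sum_subset_mobius_Pow:
  assumes "finite T"
  shows "(\<Sum>A\<in>Pow T. subset_mobius B A) = delta T B"
proof (cases "B \<subseteq> T")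
  case True
  have supersets: "{A \<in> Pow T. B \<subseteq> A} = (\<union>) B ` Pow (T - B)"
    using True by (auto simp: image_def)
  have "(\<Sum>A\<in>Pow T. subset_mobius B A) = (\<Sum>A\<in>{A \<in> Pow T. B \<subseteq> A}. (-1) ^ card (A - B))"
    unfolding subset_mobius_def by (rule sum.inter_filter[symmetric]) (use assms in simp)
  also have "\<dots> = (\<Sum>W\<in>Pow (T - B). (-1) ^ card (B \<union> W - B))"
    unfolding supersets by (subst sum.reindex) (auto intro!: inj_onI)
  also have "\<dots> = (\<Sum>W\<in>Pow (T - B). (-1) ^ card W)"
    by (intro sum.cong refl arg_cong[of _ _ "\<lambda>S. (-1::int) ^ card S"]) auto
  also have "\<dots> = delta T B"
    using sum_Pow_alternating[of "T - B"] assms True by (auto simp: delta_def)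
  finally show ?thesis .
next
  case False
  then have "subset_mobius B A = 0" if "A \<in> Pow T" for A
    using that by (auto simp: subset_mobius_def)
  then show ?thesis using False by (simp add: delta_def)
qed

lemma subset_mobius_union:
  assumes "H \<inter> T = {}" "A \<subseteq> T" "finite H" "finite A"
  shows "subset_mobius B (H \<union> A) = subset_mobius (B - T) H * subset_mobius (B \<inter> T) A"
proof -
  have "B \<subseteq> H \<union> A \<longleftrightarrow> B - T \<subseteq> H \<and> B \<inter> T \<subseteq> A"
    using assms(1,2) by blast
  moreover have "card (H \<union> A - B) = card (H - (B - T)) + card (A - B \<inter> T)"
  proof -
    have "H \<union> A - B = (H - (B - T)) \<union> (A - B \<inter> T)" "(H - (B - T)) \<inter> (A - B \<inter> T) = {}"
      using assms(1,2) by blast+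
    then show ?thesis using assms(3,4) by (simp add: card_Un_disjoint)
  qed
  ultimately show ?thesis by (simp add: subset_mobius_def power_add)
qed

lemma sum_Pow_subset_mobius:
  assumes "finite H"
  shows "(\<Sum>W\<in>Pow H. (-1) ^ card (H - W) * delta W B) = subset_mobius B H"
proof -
  have "(\<Sum>W\<in>Pow H. (-1) ^ card (H - W) * delta W B)
      = (\<Sum>W\<in>Pow H. if B = W then (-1) ^ card (H - W) else 0)"
    by (rule sum.cong) (auto simp: delta_def)
  then show ?thesis using assms by (simp add: sum.delta' subset_mobius_def)
qed

lemma delta_Un_disjoint:
  assumes "W \<inter> T = {}"
  shows "delta (W \<union> T) B = delta W (B - T) * delta T (B \<inter> T)"
  using assms by (auto simp: delta_def)

lemma sum_subset_mobius_head_tail: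
  assumes "finite H" "finite T" "H \<inter> T = {}"
  shows "(\<Sum>A\<in>Pow T. subset_mobius B (H \<union> A))
       = (\<Sum>W\<in>Pow H. (-1) ^ card (H - W) * delta (W \<union> T) B)"
proof -
  have "(\<Sum>A\<in>Pow T. subset_mobius B (H \<union> A))
      = subset_mobius (B - T) H * (\<Sum>A\<in>Pow T. subset_mobius (B \<inter> T) A)"
    using assms by (simp add: subset_mobius_union finite_subset sum_distrib_left)
  also have "\<dots> = (\<Sum>W\<in>Pow H. (-1) ^ card (H - W) * delta W (B - T)) * delta T (B \<inter> T)"
    using assms by (simp add: sum_Pow_subset_mobius sum_subset_mobius_Pow)
  also have "\<dots> = (\<Sum>W\<in>Pow H. (-1) ^ card (H - W) * delta (W \<union> T) B)"
    unfolding sum_distrib_right mult.assoc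
  proof (rule sum.cong[OF refl])
    fix W assume "W \<in> Pow H"
    then have "W \<inter> T = {}" using assms(3) by blast
    then show "(-1) ^ card (H - W) * (delta W (B - T) * delta T (B \<inter> T))
             = (-1) ^ card (H - W) * delta (W \<union> T) B"
      by (simp add: delta_Un_disjoint)
  qed
  finally show ?thesis .
qed

lemma admg_finite: "admg V D Bi \<Longrightarrow> finite V"
  by (simp add: admg_def mixed_graph_def)

lemma barren_within_ancestors:
  assumes ac: "acyclic D" and HV: "H \<subseteq> V" and barH: "barren V D H = H"
    and HS: "H \<subseteq> S" and SA: "S \<subseteq> anS V D H"
  shows "barren V D S = H"
proof (intro equalityI subsetI)
  fix s assume "s \<in> barren V D S"
  then have "s \<in> S" and des: "de V D s \<inter> S = {s}" by (auto simp: barren_def)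
  then obtain h where "h \<in> H" "(s, h) \<in> D\<^sup>*" using SA by (auto simp: anS_def an_def)
  then have "h \<in> de V D s \<inter> S" using HV HS by (auto simp: de_def)
  then show "s \<in> H" using des \<open>h \<in> H\<close> by auto
next
  fix h assume hH: "h \<in> H"
  have "s = h" if "s \<in> S" "(h, s) \<in> D\<^sup>*" for s
  proof -
    obtain h' where h': "h' \<in> H" "(s, h') \<in> D\<^sup>*" using SA \<open>s \<in> S\<close> by (auto simp: anS_def an_def)
    have "h' \<in> de V D h \<inter> H" using h' HV \<open>(h, s) \<in> D\<^sup>*\<close> by (auto simp: de_def)
    moreover have "de V D h \<inter> H = {h}" using barH hH by (auto simp: barren_def)
    ultimately have "(s, h) \<in> D\<^sup>*" using h' by auto
    with \<open>(h, s) \<in> D\<^sup>*\<close> show "s = h"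
      using ac by (metis acyclic_def rtrancl_eq_or_trancl trancl_rtrancl_trancl)
  qed
  then show "h \<in> barren V D S" using hH HV HS by (auto simp: barren_def de_def)
qed

lemma tail_subset_ancestors:
  assumes "admg V D Bi" and "is_head V D Bi H"
  shows "tail V D Bi H \<subseteq> anS V D H - H"
proof -
  have DV: "D \<subseteq> V \<times> V" and ac: "acyclic D"
    using assms(1) by (auto simp: admg_def mixed_graph_def)
  have HV: "H \<subseteq> V" and barH: "barren V D H = H"
    using assms(2) by (auto simp: is_head_def)
  have dis_sub: "disS Bi (anS V D H) H \<subseteq> anS V D H"
    by (auto simp: disS_def dis_def)
  have "p \<in> anS V D H - H" if p: "p \<in> paS D (disS Bi (anS V D H) H)" for p
  proof -
    obtain d where pd: "(p, d) \<in> D" and "d \<in> anS V D H"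
      using p dis_sub by (auto simp: paS_def pa_def)
    then obtain h where hH: "h \<in> H" and dh: "(d, h) \<in> D\<^sup>*" by (auto simp: anS_def an_def)
    have "p \<notin> H"
    proof
      assume "p \<in> H"
      then have "de V D p \<inter> H = {p}" using barH by (auto simp: barren_def)
      moreover have "h \<in> de V D p \<inter> H" using pd dh hH HV by (auto simp: de_def)
      ultimately have "(p, p) \<in> D\<^sup>+" using pd dh by auto
      then show False using ac by (simp add: acyclic_def)
    qed
    moreover have "(p, h) \<in> D\<^sup>*" using pd dh by (rule converse_rtrancl_into_rtrancl)
    ultimately show ?thesis using pd hH DV by (auto simp: anS_def an_def)
  qed
  then show ?thesis using dis_sub by (auto simp: tail_def)
qed

lemma barren_head_Un_tail:
  assumes "admg V D Bi" and "is_head V D Bi H" and "A \<subseteq> tail V D Bi H"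
  shows "barren V D (H \<union> A) = H"
proof (rule barren_within_ancestors)
  show "acyclic D" using assms(1) by (simp add: admg_def)
  show "H \<subseteq> V" "barren V D H = H" using assms(2) by (auto simp: is_head_def)
  show "H \<subseteq> H \<union> A" by simp
  have "H \<subseteq> anS V D H" using \<open>H \<subseteq> V\<close> by (auto simp: anS_def an_def)
  then show "H \<union> A \<subseteq> anS V D H" using tail_subset_ancestors[OF assms(1,2)] assms(3) by blast
qed

lemma inj_on_head_Un_tail:
  assumes "admg V D Bi"
  shows "inj_on (\<lambda>(H, A). H \<union> A) (SIGMA H:heads V D Bi. Pow (tail V D Bi H))"
proof (rule inj_onI, clarsimp simp: heads_def)
  fix H A H' A'
  assume hd: "is_head V D Bi H" "A \<subseteq> tail V D Bi H" and hd': "is_head V D Bi H'" "A' \<subseteq> tail V D Bi H'"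
    and eq: "H \<union> A = H' \<union> A'"
  have "H = H'" using barren_head_Un_tail[OF assms hd] barren_head_Un_tail[OF assms hd'] eq by simp
  moreover have "A \<inter> H = {}" "A' \<inter> H' = {}"
    using tail_subset_ancestors[OF assms] hd hd' by blast+
  ultimately show "H = H' \<and> A = A'" using eq by blast
qed

lemma finite_heads:
  assumes "admg V D Bi"
  shows "finite (heads V D Bi)"
proof (rule finite_subset)
  show "heads V D Bi \<subseteq> Pow V" by (auto simp: heads_def is_head_def)
  show "finite (Pow V)" using admg_finite[OF assms] by simp
qed

lemma head_tail_subset_vertices:
  assumes "admg V D Bi" and "H \<in> heads V D Bi"
  shows "H \<union> tail V D Bi H \<subseteq> V"
proof -
  have "is_head V D Bi H" using assms(2) by (simp add: heads_def)
  moreover have "anS V D H \<subseteq> V" by (auto simp: anS_def an_def)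
  ultimately show ?thesis using tail_subset_ancestors[OF assms(1)] by (auto simp: is_head_def)
qed

lemma param_sets_eq_insert_image:
  "param_sets V D Bi = insert {} ((\<lambda>(H, A). H \<union> A) ` (SIGMA H:heads V D Bi. Pow (tail V D Bi H)))"
  by (auto simp: param_sets_def image_def)

lemma sum_param_sets:
  assumes adm: "admg V D Bi"
  shows "(\<Sum>S\<in>param_sets V D Bi. g S)
       = g {} + (\<Sum>H\<in>heads V D Bi. \<Sum>A\<in>Pow (tail V D Bi H). g (H \<union> A))"
proof -
  let ?\<Sigma> = "SIGMA H:heads V D Bi. Pow (tail V D Bi H)"
  have ftail: "finite (tail V D Bi H)" if "H \<in> heads V D Bi" for H
    using head_tail_subset_vertices[OF adm that] admg_finite[OF adm] finite_subset by blast
  have fin: "finite ?\<Sigma>" using finite_heads[OF adm] ftail by auto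
  have "{} \<notin> (\<lambda>(H, A). H \<union> A) ` ?\<Sigma>" by (auto simp: heads_def is_head_def)
  then have "(\<Sum>S\<in>param_sets V D Bi. g S) = g {} + (\<Sum>S\<in>(\<lambda>(H, A). H \<union> A) ` ?\<Sigma>. g S)"
    unfolding param_sets_eq_insert_image using fin by simp
  also have "\<dots> = g {} + (\<Sum>(H, A)\<in>?\<Sigma>. g (H \<union> A))"
    by (subst sum.reindex[OF inj_on_head_Un_tail[OF adm]]) (simp add: comp_def case_prod_unfold)
  also have "\<dots> = g {} + (\<Sum>H\<in>heads V D Bi. \<Sum>A\<in>Pow (tail V D Bi H). g (H \<union> A))"
    by (subst sum.Sigma) (use finite_heads[OF adm] ftail in auto)
  finally show ?thesis .
qed

lemma u_imset_eq_delta_minus_param_sets: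
  assumes adm: "admg V D Bi"
  shows "u_imset V D Bi B = delta V B - (\<Sum>S\<in>param_sets V D Bi. subset_mobius B S)"
proof -
  have fV: "finite V" using admg_finite[OF adm] .
  have param_Pow: "param_sets V D Bi \<subseteq> Pow V"
    using head_tail_subset_vertices[OF adm] by (auto simp: param_sets_def)
  have "{A. B \<subseteq> A \<and> A \<subseteq> V} = {A \<in> Pow V. B \<subseteq> A}" by auto
  then have "u_imset V D Bi B
      = (\<Sum>A\<in>Pow V. if B \<subseteq> A then (-1) ^ card (A - B) * (1 - char_imset V D Bi A) else 0)"
    unfolding u_imset_def using fV by (simp only: sum.inter_filter finite_Pow_iff)
  also have "\<dots> = (\<Sum>A\<in>Pow V. subset_mobius B A - (if A \<in> param_sets V D Bi then subset_mobius B A else 0))"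
    by (rule sum.cong) (auto simp: subset_mobius_def char_imset_def)
  also have "\<dots> = (\<Sum>A\<in>Pow V. subset_mobius B A) - (\<Sum>A\<in>Pow V \<inter> param_sets V D Bi. subset_mobius B A)"
    using fV by (simp add: sum_subtractf sum.inter_restrict)
  also have "Pow V \<inter> param_sets V D Bi = param_sets V D Bi"
    using param_Pow by blast
  finally show ?thesis using fV by (simp add: sum_subset_mobius_Pow)
qed

lemma u_imset_eq_heads_expansion:
  assumes adm: "admg V D Bi"
  shows "u_imset V D Bi B =
      delta V B - delta {} B
      - (\<Sum>H\<in>heads V D Bi. \<Sum>W\<in>Pow H. (-1) ^ card (H - W) * delta (W \<union> tail V D Bi H) B)"
proof -
  have head_tail: "(\<Sum>A\<in>Pow (tail V D Bi H). subset_mobius B (H \<union> A))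
      = (\<Sum>W\<in>Pow H. (-1) ^ card (H - W) * delta (W \<union> tail V D Bi H) B)"
    if H: "H \<in> heads V D Bi" for H
  proof (rule sum_subset_mobius_head_tail)
    show "finite H" "finite (tail V D Bi H)"
      using head_tail_subset_vertices[OF adm H] admg_finite[OF adm] finite_subset by blast+
    show "H \<inter> tail V D Bi H = {}"
      using tail_subset_ancestors[OF adm] H by (auto simp: heads_def)
  qed
  have "subset_mobius B {} = delta {} B" by (auto simp: subset_mobius_def delta_def)
  then show ?thesis
    by (simp add: u_imset_eq_delta_minus_param_sets[OF adm] sum_param_sets[OF adm] head_tail)
qed

theorem theorem3p6:
  fixes V :: "'v set" and D Bi :: "('v \<times> 'v) set"
  assumes "MAG V D Bi"
  shows "\<forall>B. B \<subseteq> V \<longrightarrow>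
    u_imset V D Bi B =
      delta V B - delta {} B
      - (\<Sum>H\<in>heads V D Bi. \<Sum>W\<in>Pow H.
            (-1) ^ card (H - W) * delta (W \<union> tail V D Bi H) B)"
  using assms by (simp add: MAG_def u_imset_eq_heads_expansion)

end
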